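(* Let $F_2$ be the free group on generators $a,b$, and let $\mathcal A=\{a,b,\bar a,\bar b\}$, where $\bar a,\bar b$ denote $a^{-1},b^{-1}$. There exist a real number $\alpha>1$, an integer $n_0\in\mathbb N$, and, for every even $n\in\mathbb N$, a set $\mathcal W_n$ of words in the alphabet $\mathcal A$ such that for all even $n$: (1) every $w\in\mathcal W_n$ has length $n$ and represents the identity element of $F_2$; (2) if $n\geq n_0$ then $|\mathcal W_n|\geq \alpha^n$; (3) for every integer $t$ with $n/4\le t<n/2$, the initial subwords (prefixes) of length $t$ of distinct words in $\mathcal W_n$ represent distinct elements of $F_2$, i.e. the map $w\mapsto$ (element of $F_2$ represented by the length-$t$ prefix of $w$) is injective on $\mathcal W_n$.
   Context: A word in $\mathcal A$ is a finite sequence of letters from $\mathcal A$; it represents the element of $F_2$ obtained by multiplying the letters, with $\bar a=a^{-1}$ and $\bar b=b^{-1}$. A word is called trivial if it represents the identity of $F_2$. *)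

theory Defs
  imports Complex_Main
begin

datatype letter = La | Lb | La_inv | Lb_inv

fun letter_inv :: "letter \<Rightarrow> letter" where
  "letter_inv La = La_inv"
| "letter_inv Lb = Lb_inv"
| "letter_inv La_inv = La"
| "letter_inv Lb_inv = Lb"

definition cancel_step :: "(letter list \<times> letter list) set" where
  "cancel_step = {(p @ [x, letter_inv x] @ q, p @ q) | p x q. True}"

text \<open>Two words represent the same element of F_2 iff they are related by the
  equivalence relation generated by elementary cancellations
  (F_2 = words modulo this relation).\<close>
definition same_elem :: "letter list \<Rightarrow> letter list \<Rightarrow> bool" where
  "same_elem u v \<longleftrightarrow> (u, v) \<in> (cancel_step \<union> cancel_step\<inverse>)\<^sup>*"

definition trivial_word :: "letter list \<Rightarrow> bool" where
  "trivial_word w \<longleftrightarrow> same_elem w []"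

end

theory Submission
  imports Defs
begin

text \<open>Take all \<open>2\<^sup>k\<close> positive words \<open>s\<close> of length \<open>k = \<lceil>n/4\<rceil>\<close>, pad them with \<open>a\<close>'s to a
  word \<open>u\<close> of length \<open>n/2\<close>, and let \<open>W\<^sub>n\<close> consist of the trivial words \<open>u u\<^sup>-\<^sup>1\<close>. A prefix of
  length \<open>t \<in> [n/4, n/2)\<close> is the positive word \<open>s a\<^sup>t\<^sup>-\<^sup>k\<close>; positive words are freely reduced,
  and free reduction is an invariant of \<open>same_elem\<close>, so these prefixes represent pairwise
  distinct elements. Finally \<open>2\<^sup>k \<ge> (2\<^sup>1\<^sup>/\<^sup>4)\<^sup>n\<close>.\<close>

lemma letter_inv_inv [simp]: "letter_inv (letter_inv x) = x"
  by (cases x) auto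

fun reduce_cons :: "letter \<Rightarrow> letter list \<Rightarrow> letter list" where
  "reduce_cons x [] = [x]"
| "reduce_cons x (y # ys) = (if y = letter_inv x then ys else x # y # ys)"

fun reduced :: "letter list \<Rightarrow> bool" where
  "reduced [] = True"
| "reduced [x] = True"
| "reduced (x # y # ys) \<longleftrightarrow> y \<noteq> letter_inv x \<and> reduced (y # ys)"

definition reduce :: "letter list \<Rightarrow> letter list" where
  "reduce w = foldr reduce_cons w []"

lemma reduce_Nil [simp]: "reduce [] = []"
  and reduce_Cons [simp]: "reduce (x # w) = reduce_cons x (reduce w)"
  by (simp_all add: reduce_def)

lemma reduced_Cons_tl: "reduced (y # ys) \<Longrightarrow> reduced ys"
  by (cases ys) auto

lemma reduced_reduce_cons: "reduced r \<Longrightarrow> reduced (reduce_cons x r)"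
  by (cases r) (auto dest: reduced_Cons_tl)

lemma reduced_reduce: "reduced (reduce w)"
  by (induction w) (auto intro: reduced_reduce_cons)

lemma reduce_cons_inv_cancel: "reduced r \<Longrightarrow> reduce_cons x (reduce_cons (letter_inv x) r) = r"
  by (cases r rule: reduced.cases) auto

lemma reduce_append: "reduce (p @ q) = foldr reduce_cons p (reduce q)"
  unfolding reduce_def by simp

lemma reduce_cancel_step: "(u, v) \<in> cancel_step \<Longrightarrow> reduce u = reduce v"
proof -
  have "reduce (p @ [x, letter_inv x] @ q) = reduce (p @ q)" for p x q
    using reduce_cons_inv_cancel[OF reduced_reduce, of x q] by (simp add: reduce_append)
  then show "(u, v) \<in> cancel_step \<Longrightarrow> reduce u = reduce v"
    unfolding cancel_step_def by auto
qed

lemma same_elem_imp_reduce_eq: "same_elem u v \<Longrightarrow> reduce u = reduce v"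
  unfolding same_elem_def
  by (induction rule: rtrancl_induct) (auto dest: reduce_cancel_step)

definition positive :: "letter list \<Rightarrow> bool" where
  "positive w \<longleftrightarrow> set w \<subseteq> {La, Lb}"

lemma reduce_positive: "positive w \<Longrightarrow> reduce w = w"
proof (induction w)
  case Nil
  then show ?case by simp
next
  case (Cons x w)
  then have "reduce w = w" by (simp add: positive_def)
  moreover have "w \<noteq> [] \<Longrightarrow> hd w \<noteq> letter_inv x"
    using Cons.prems by (cases w) (auto simp: positive_def)
  ultimately show ?case
    by (cases w) auto
qed

lemma positive_same_elem_imp_eq:
  "positive u \<Longrightarrow> positive v \<Longrightarrow> same_elem u v \<Longrightarrow> u = v"
  using same_elem_imp_reduce_eq reduce_positive by metis

definition word_inv :: "letter list \<Rightarrow> letter list" where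
  "word_inv u = rev (map letter_inv u)"

lemma length_word_inv [simp]: "length (word_inv u) = length u"
  by (simp add: word_inv_def)

lemma cancel_steps_word_inv: "(xs @ u @ word_inv u @ ys, xs @ ys) \<in> cancel_step\<^sup>*"
proof (induction u arbitrary: xs ys)
  case Nil
  then show ?case by (simp add: word_inv_def)
next
  case (Cons x u)
  have "(xs @ x # u @ word_inv u @ [letter_inv x] @ ys, (xs @ [x]) @ [letter_inv x] @ ys)
      \<in> cancel_step\<^sup>*"
    using Cons.IH[of "xs @ [x]" "letter_inv x # ys"] by simp
  moreover have "((xs @ [x]) @ [letter_inv x] @ ys, xs @ ys) \<in> cancel_step"
    unfolding cancel_step_def by auto
  ultimately show ?case by (simp add: word_inv_def)
qed

lemma trivial_word_append_word_inv: "trivial_word (u @ word_inv u)"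
proof -
  have "(u @ word_inv u, []) \<in> cancel_step\<^sup>*"
    using cancel_steps_word_inv[of "[]" u "[]"] by simp
  then show ?thesis
    unfolding trivial_word_def same_elem_def
    using rtrancl_mono[of cancel_step "cancel_step \<union> cancel_step\<inverse>"] by blast
qed

definition pad :: "nat \<Rightarrow> letter list \<Rightarrow> letter list" where
  "pad m s = s @ replicate (m - length s) La"

lemma length_pad: "length s \<le> m \<Longrightarrow> length (pad m s) = m"
  by (simp add: pad_def)

lemma positive_pad: "positive s \<Longrightarrow> positive (pad m s)"
  by (auto simp: pad_def positive_def)

lemma take_pad: "length s \<le> t \<Longrightarrow> t \<le> m \<Longrightarrow> take t (pad m s) = pad t s"
  by (simp add: pad_def min_def)

lemma pad_eq_imp_eq: "pad t s = pad t r \<Longrightarrow> length s = length r \<Longrightarrow> s = r"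
  by (simp add: pad_def)

definition positive_words :: "nat \<Rightarrow> letter list set" where
  "positive_words k = {s. positive s \<and> length s = k}"

lemma card_positive_words: "card (positive_words k) = 2 ^ k"
  using card_lists_length_eq[of "{La, Lb}" k]
  by (simp add: positive_words_def positive_def numeral_2_eq_2)

definition mirrored_words :: "nat \<Rightarrow> nat \<Rightarrow> letter list set" where
  "mirrored_words k m = (\<lambda>s. pad m s @ word_inv (pad m s)) ` positive_words k"

lemma mirrored_words_trivial:
  "k \<le> m \<Longrightarrow> w \<in> mirrored_words k m \<Longrightarrow> length w = 2 * m \<and> trivial_word w"
  by (auto simp: mirrored_words_def positive_words_def length_pad
      trivial_word_append_word_inv)

lemma take_mirrored_word:
  assumes "s \<in> positive_words k" "k \<le> t" "t \<le> m"
  shows "take t (pad m s @ word_inv (pad m s)) = pad t s"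
  using assms by (simp add: positive_words_def length_pad take_pad)

lemma mirrored_words_prefixes_distinct:
  assumes "k \<le> t" "t \<le> m" "w \<in> mirrored_words k m" "v \<in> mirrored_words k m"
    and "same_elem (take t w) (take t v)"
  shows "w = v"
proof -
  obtain s r where s: "s \<in> positive_words k" and r: "r \<in> positive_words k"
    and w: "w = pad m s @ word_inv (pad m s)" and v: "v = pad m r @ word_inv (pad m r)"
    using assms(3,4) by (auto simp: mirrored_words_def)
  have "same_elem (pad t s) (pad t r)"
    using assms(5) unfolding w v take_mirrored_word[OF s assms(1,2)]
      take_mirrored_word[OF r assms(1,2)] .
  moreover have "positive (pad t s)" "positive (pad t r)"
    using s r by (simp_all add: positive_words_def positive_pad)
  ultimately have "pad t s = pad t r"
    by (rule positive_same_elem_imp_eq[rotated 2])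
  then have "s = r"
    using s r by (auto simp: positive_words_def intro: pad_eq_imp_eq)
  then show ?thesis by (simp add: w v)
qed

lemma card_mirrored_words:
  assumes "k \<le> m"
  shows "card (mirrored_words k m) = 2 ^ k"
proof -
  have "inj_on (\<lambda>s. pad m s @ word_inv (pad m s)) (positive_words k)"
  proof (rule inj_onI)
    fix s r
    assume s: "s \<in> positive_words k" and r: "r \<in> positive_words k"
      and "pad m s @ word_inv (pad m s) = pad m r @ word_inv (pad m r)"
    then have "take k (pad m s @ word_inv (pad m s)) = take k (pad m r @ word_inv (pad m r))"
      by simp
    then have "pad k s = pad k r"
      unfolding take_mirrored_word[OF s order_refl assms]
        take_mirrored_word[OF r order_refl assms] .
    then show "s = r"
      using s r by (auto simp: positive_words_def intro: pad_eq_imp_eq)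
  qed
  then show ?thesis
    by (simp add: mirrored_words_def card_image card_positive_words)
qed

lemma root4_two_pow_le: "4 * k \<ge> n \<Longrightarrow> (2 powr (1/4) :: real) ^ n \<le> 2 ^ k"
proof -
  assume "4 * k \<ge> n"
  then have "real n / 4 \<le> real k" by linarith
  then have "(2::real) powr (real n / 4) \<le> 2 powr real k" by simp
  then show ?thesis by (simp add: powr_realpow[symmetric] powr_powr)
qed

theorem lemma2:
  shows "\<exists>(\<alpha>::real) (n\<^sub>0::nat) (W :: nat \<Rightarrow> letter list set). \<alpha> > 1 \<and>
    (\<forall>n. even n \<longrightarrow>
       (\<forall>w \<in> W n. length w = n \<and> trivial_word w) \<and>
       (n \<ge> n\<^sub>0 \<longrightarrow> real (card (W n)) \<ge> \<alpha> ^ n) \<and>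
       (\<forall>t::nat. n \<le> 4 * t \<and> 2 * t < n \<longrightarrow>
          (\<forall>w \<in> W n. \<forall>v \<in> W n. w \<noteq> v \<longrightarrow> \<not> same_elem (take t w) (take t v))))"
proof (intro exI[of _ "2 powr (1/4)"] exI[of _ 0]
    exI[of _ "\<lambda>n. mirrored_words ((n + 2) div 4) (n div 2)"] conjI allI impI)
  show "(1::real) < 2 powr (1/4)" by simp
  fix n :: nat
  assume "even n"
  then have k_le_m: "(n + 2) div 4 \<le> n div 2" and n_le: "n \<le> 4 * ((n + 2) div 4)"
    and m: "2 * (n div 2) = n"
    by presburger+
  show "\<forall>w \<in> mirrored_words ((n + 2) div 4) (n div 2). length w = n \<and> trivial_word w"
    using mirrored_words_trivial[OF k_le_m] m by metis
  show "(2 powr (1/4)) ^ n \<le> real (card (mirrored_words ((n + 2) div 4) (n div 2)))"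
    unfolding card_mirrored_words[OF k_le_m] using root4_two_pow_le[OF n_le] by simp
  fix t :: nat
  assume "n \<le> 4 * t \<and> 2 * t < n"
  with \<open>even n\<close> have "(n + 2) div 4 \<le> t" "t \<le> n div 2" by presburger+
  then show "\<forall>w \<in> mirrored_words ((n + 2) div 4) (n div 2).
      \<forall>v \<in> mirrored_words ((n + 2) div 4) (n div 2).
        w \<noteq> v \<longrightarrow> \<not> same_elem (take t w) (take t v)"
    using mirrored_words_prefixes_distinct by blast
qed

end
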